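(* Suppose $g=1$ (so $f$ has degree $3$) and $\mathfrak{s}\subset\mathcal{R}$ is a cluster of cardinality $2$. Then $B_{f,\mathfrak{s}}=4v(2)$.
   Context: $K$ is a field of characteristic $0$, complete for a discrete valuation $v$ (values in $\mathbb{Q}\cup\{+\infty\}$) with algebraically closed residue field of characteristic $2$; $v$ extends to a fixed algebraic closure $\bar K$. $f\in K[x]$ is separable of degree $2g+1$ with root set $\mathcal{R}\subset\bar K$. Discs: $D_{\alpha,b}=\{z\in\bar K:v(z-\alpha)\ge b\}$. A nonempty $\mathfrak{s}\subseteq\mathcal{R}$ is a cluster if $\mathfrak{s}=D\cap\mathcal{R}$ for some disc $D$; $d_+(\mathfrak{s})=\min_{a\ne a'\in\mathfrak{s}}v(a-a')$; for $\mathfrak{s}\ne\mathcal{R}$, the parent $\mathfrak{s}'$ is the smallest cluster properly containing $\mathfrak{s}$ and $d_-(\mathfrak{s})=d_+(\mathfrak{s}')$. For nonzero $h\in\bar K[z]$, $v(h)$ is the minimum valuation of its coefficients. A part-square decomposition of $h$ is $h=q^2+\rho$ with $\deg q\le\lceil\deg h/2\rceil$, and $t_{q,\rho}=v(\rho)-v(h)$. It is good if $t_{q,\rho}\ge2v(2)$ or no part-square decomposition $h=\tilde q^2+\tilde\rho$ has $t_{\tilde q,\tilde\rho}>t_{q,\rho}$. For a finite nonempty multiset $S\subset\bar K$ and disc $D=D_{\alpha,v(\beta)}$, $\mathfrak{t}^{S}(D)=\min\{t_{q,\rho},2v(2)\}$ where $h$ has root multiset $S$ and $h(\alpha+\beta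 z)=q^2+\rho$ is any good part-square decomposition (independent of choices). For an even-cardinality cluster $\mathfrak{s}$ and $\alpha\in\mathfrak{s}$, for $b\ge0$ set $\mathfrak{t}^{\mathfrak{s}}_+(b)=\mathfrak{t}^{\mathfrak{s}}(D_{\alpha,d_+(\mathfrak{s})-b})$, $\mathfrak{t}^{\mathfrak{s}}_-(b)=\mathfrak{t}^{\mathcal{R}\setminus\mathfrak{s}}(D_{\alpha,d_-(\mathfrak{s})+b})$, $b_0(\mathfrak{t}^{\mathfrak{s}}_\pm)$ the least $b\ge0$ at which $\mathfrak{t}^{\mathfrak{s}}_\pm$ equals $2v(2)$, and $B_{f,\mathfrak{s}}=b_0(\mathfrak{t}^{\mathfrak{s}}_+)+b_0(\mathfrak{t}^{\mathfrak{s}}_-)$. *)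

theory Defs
  imports Complex_Main "HOL-Library.Extended_Real" "HOL-Library.Multiset"
    "HOL-Computational_Algebra.Polynomial" "HOL-Computational_Algebra.Polynomial_Factorial"
begin

text \<open>The type 'L plays the role of the fixed algebraic closure of K;
  K is a subset of 'L (a subfield); v : 'L -> Q \<union> {+\<infinity>} is a valuation on 'L, modelled
  with values in ereal (v x = \<infinity> iff x = 0, finite values rational).\<close>

definition is_subfield :: "'L::field set \<Rightarrow> bool" where
  "is_subfield K \<longleftrightarrow> 0 \<in> K \<and> 1 \<in> K \<and>
     (\<forall>x\<in>K. \<forall>y\<in>K. x + y \<in> K \<and> x - y \<in> K \<and> x * y \<in> K) \<and>
     (\<forall>x\<in>K. x \<noteq> 0 \<longrightarrow> inverse x \<in> K)"

definition is_valuation :: "('L::field \<Rightarrow> ereal) \<Rightarrow> bool" where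
  "is_valuation v \<longleftrightarrow>
     (\<forall>x. v x = \<infinity> \<longleftrightarrow> x = 0) \<and>
     (\<forall>x. x \<noteq> 0 \<longrightarrow> (\<exists>r::rat. v x = ereal (real_of_rat r))) \<and>
     (\<forall>x y. v (x * y) = v x + v y) \<and>
     (\<forall>x y. min (v x) (v y) \<le> v (x + y))"

definition discrete_on :: "('L::field \<Rightarrow> ereal) \<Rightarrow> 'L set \<Rightarrow> bool" where
  "discrete_on v K \<longleftrightarrow>
     (\<exists>c::rat. c > 0 \<and> v ` (K - {0}) = {ereal (real_of_rat (of_int n * c)) | n. True})"

definition complete_wrt :: "('L::field \<Rightarrow> ereal) \<Rightarrow> 'L set \<Rightarrow> bool" where
  "complete_wrt v K \<longleftrightarrow>
     (\<forall>u::nat \<Rightarrow> 'L. (\<forall>n. u n \<in> K) \<longrightarrow>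
        (\<forall>M::real. \<exists>N. \<forall>m\<ge>N. \<forall>n\<ge>N. ereal M \<le> v (u m - u n)) \<longrightarrow>
        (\<exists>l\<in>K. \<forall>M::real. \<exists>N. \<forall>n\<ge>N. ereal M \<le> v (u n - l)))"

text \<open>The residue field O_K / m_K is algebraically closed: every polynomial over O_K whose
  reduction is nonconstant (leading coefficient a unit, degree \<ge> 1) has a root modulo m_K.\<close>
definition residue_alg_closed :: "('L::field \<Rightarrow> ereal) \<Rightarrow> 'L set \<Rightarrow> bool" where
  "residue_alg_closed v K \<longleftrightarrow>
     (\<forall>p::'L poly. (\<forall>i. coeff p i \<in> K \<and> 0 \<le> v (coeff p i)) \<longrightarrow> degree p \<ge> 1 \<longrightarrow>
        v (lead_coeff p) = 0 \<longrightarrow> (\<exists>a\<in>K. 0 \<le> v a \<and> 0 < v (poly p a)))"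

definition alg_closed :: "'L::field itself \<Rightarrow> bool" where
  "alg_closed _ \<longleftrightarrow> (\<forall>p::'L poly. degree p \<ge> 1 \<longrightarrow> (\<exists>x. poly p x = 0))"

definition algebraic_over :: "'L::field set \<Rightarrow> bool" where
  "algebraic_over K \<longleftrightarrow>
     (\<forall>x::'L. \<exists>p. p \<noteq> 0 \<and> (\<forall>i. coeff p i \<in> K) \<and> poly p x = 0)"

definition dvf_setting :: "'L::field_char_0 set \<Rightarrow> ('L \<Rightarrow> ereal) \<Rightarrow> bool" where
  "dvf_setting K v \<longleftrightarrow>
     is_subfield K \<and> alg_closed TYPE('L) \<and> algebraic_over K \<and>
     is_valuation v \<and> discrete_on v K \<and> complete_wrt v K \<and>
     residue_alg_closed v K \<and> 0 < v (2::'L)"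

definition disc :: "('L::field \<Rightarrow> ereal) \<Rightarrow> 'L \<Rightarrow> ereal \<Rightarrow> 'L set" where
  "disc v \<alpha> b = {z. b \<le> v (z - \<alpha>)}"

definition is_cluster :: "('L::field \<Rightarrow> ereal) \<Rightarrow> 'L set \<Rightarrow> 'L set \<Rightarrow> bool" where
  "is_cluster v R s \<longleftrightarrow> s \<noteq> {} \<and> (\<exists>\<alpha> (b::rat). s = disc v \<alpha> (ereal (real_of_rat b)) \<inter> R)"

definition dplus :: "('L::field \<Rightarrow> ereal) \<Rightarrow> 'L set \<Rightarrow> ereal" where
  "dplus v s = Min {v (a - a') | a a'. a \<in> s \<and> a' \<in> s \<and> a \<noteq> a'}"

definition parent :: "('L::field \<Rightarrow> ereal) \<Rightarrow> 'L set \<Rightarrow> 'L set \<Rightarrow> 'L set" where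
  "parent v R s = (THE p. is_cluster v R p \<and> s \<subset> p \<and>
                      (\<forall>c. is_cluster v R c \<and> s \<subset> c \<longrightarrow> p \<subseteq> c))"

definition dminus :: "('L::field \<Rightarrow> ereal) \<Rightarrow> 'L set \<Rightarrow> 'L set \<Rightarrow> ereal" where
  "dminus v R s = dplus v (parent v R s)"

definition vpoly :: "('L::field \<Rightarrow> ereal) \<Rightarrow> 'L poly \<Rightarrow> ereal" where
  "vpoly v h = (INF i. v (coeff h i))"

definition is_psd :: "'L::field poly \<Rightarrow> 'L poly \<Rightarrow> 'L poly \<Rightarrow> bool" where
  "is_psd h q \<rho> \<longleftrightarrow> h = q\<^sup>2 + \<rho> \<and> degree q \<le> nat \<lceil>real (degree h) / 2\<rceil>"

definition tpsd :: "('L::field \<Rightarrow> ereal) \<Rightarrow> 'L poly \<Rightarrow> 'L poly \<Rightarrow> ereal" where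
  "tpsd v h \<rho> = vpoly v \<rho> - vpoly v h"

definition good_psd :: "('L::field \<Rightarrow> ereal) \<Rightarrow> 'L poly \<Rightarrow> 'L poly \<Rightarrow> 'L poly \<Rightarrow> bool" where
  "good_psd v h q \<rho> \<longleftrightarrow> is_psd h q \<rho> \<and>
     (2 * v 2 \<le> tpsd v h \<rho> \<or> \<not> (\<exists>q' \<rho>'. is_psd h q' \<rho>' \<and> tpsd v h \<rho> < tpsd v h \<rho>'))"

definition poly_of_roots :: "'L::field multiset \<Rightarrow> 'L poly" where
  "poly_of_roots S = prod_mset (image_mset (\<lambda>a. [:- a, 1:]) S)"

text \<open>t^S(D_{\<alpha>, v(\<beta>)}), computed with a (chosen) good part-square decomposition of h(\<alpha> + \<beta> z).\<close>
definition tdisc :: "('L::field \<Rightarrow> ereal) \<Rightarrow> 'L multiset \<Rightarrow> 'L \<Rightarrow> 'L \<Rightarrow> ereal" where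
  "tdisc v S \<alpha> \<beta> =
     (let h = pcompose (poly_of_roots S) [:\<alpha>, \<beta>:];
          qr = (SOME qr. good_psd v h (fst qr) (snd qr))
      in min (tpsd v h (snd qr)) (2 * v 2))"

text \<open>t^S(D_{\<alpha>, r}) using a chosen \<beta> with v(\<beta>) = r.\<close>
definition tdisc_r :: "('L::field \<Rightarrow> ereal) \<Rightarrow> 'L multiset \<Rightarrow> 'L \<Rightarrow> ereal \<Rightarrow> ereal" where
  "tdisc_r v S \<alpha> r = tdisc v S \<alpha> (SOME \<beta>. v \<beta> = r)"

definition tplus :: "('L::field \<Rightarrow> ereal) \<Rightarrow> 'L set \<Rightarrow> 'L \<Rightarrow> rat \<Rightarrow> ereal" where
  "tplus v s \<alpha> b = tdisc_r v (mset_set s) \<alpha> (dplus v s - ereal (real_of_rat b))"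

definition tminus :: "('L::field \<Rightarrow> ereal) \<Rightarrow> 'L set \<Rightarrow> 'L set \<Rightarrow> 'L \<Rightarrow> rat \<Rightarrow> ereal" where
  "tminus v R s \<alpha> b = tdisc_r v (mset_set (R - s)) \<alpha> (dminus v R s + ereal (real_of_rat b))"

definition b0 :: "('L::field \<Rightarrow> ereal) \<Rightarrow> (rat \<Rightarrow> ereal) \<Rightarrow> rat" where
  "b0 v F = (LEAST b. 0 \<le> b \<and> F b = 2 * v 2)"

definition Bfs :: "('L::field \<Rightarrow> ereal) \<Rightarrow> 'L set \<Rightarrow> 'L set \<Rightarrow> 'L \<Rightarrow> ereal" where
  "Bfs v R s \<alpha> = ereal (real_of_rat (b0 v (tplus v s \<alpha>) + b0 v (tminus v R s \<alpha>)))"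

end

(* Write s = {alpha, a} and let a' be the third root of f.  The disc cutting out s misses a', so
   v(alpha - a') < v(alpha - a) = d_+(s), and the parent of s is R, whence d_-(s) = v(alpha - a').
   Rescaled to D_{alpha, d_+(s) - b}, the polynomial with roots s becomes beta^2 z^2 + beta (alpha - a) z;
   rescaled to D_{alpha, d_-(s) + b}, the one with root a' becomes beta z + (alpha - a').  Each is a
   square plus its linear term, whose relative valuation is b.  No part-square decomposition does
   better while b < 2 v(2): killing the linear term c would need v(2 e u) = v(c) for the linear
   coefficient 2 e u of the square, but the other coefficients force v(2 e u) > v(c).  Hence
   t_+(b) = t_-(b) = min(b, 2 v(2)), both b_0 equal 2 v(2), and B = 4 v(2). *)

theory Submission
  imports Defs
begin

section \<open>Valuations\<close>

locale valuation =
  fixes v :: "'a::field \<Rightarrow> ereal"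
  assumes is_valuation: "is_valuation v"
begin

lemma eq_infinity_iff [simp]: "v x = \<infinity> \<longleftrightarrow> x = 0"
  using is_valuation unfolding is_valuation_def by blast

lemma zero [simp]: "v 0 = \<infinity>"
  by simp

lemma mult [simp]: "v (x * y) = v x + v y"
  using is_valuation unfolding is_valuation_def by blast

lemma add_ge_min: "min (v x) (v y) \<le> v (x + y)"
  using is_valuation unfolding is_valuation_def by blast

lemma rational_value:
  assumes "x \<noteq> 0"
  obtains r :: rat where "v x = ereal (of_rat r)"
  using is_valuation assms unfolding is_valuation_def by blast

lemma real_value:
  assumes "x \<noteq> 0"
  obtains r :: real where "v x = ereal r"
  using rational_value[OF assms] by metis

lemma not_MInfty [simp]: "v x \<noteq> - \<infinity>"
  by (cases "x = 0") (auto elim: real_value)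

lemma one [simp]: "v 1 = 0"
proof -
  obtain r where r: "v 1 = ereal r" using real_value[of 1] by auto
  have "v 1 = v 1 + v 1" using mult[of 1 1] by simp
  then show ?thesis using r by (simp add: zero_ereal_def)
qed

lemma uminus [simp]: "v (- x) = v x"
proof -
  obtain r where r: "v (- 1) = ereal r" using real_value[of "- 1"] by auto
  have "v (- 1) + v (- 1) = 0" using mult[of "- 1" "- 1"] by simp
  then have "v (- 1) = 0" using r by (simp add: zero_ereal_def)
  then show ?thesis using mult[of "- 1" x] by simp
qed

lemma diff_ge_min: "min (v x) (v y) \<le> v (x - y)"
  using add_ge_min[of x "- y"] by simp

lemma diff_commute: "v (x - y) = v (y - x)"
  using uminus[of "x - y"] by simp

lemma add_eq_left:
  assumes "v x < v y"
  shows "v (x + y) = v x"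
proof (rule antisym)
  show "v x \<le> v (x + y)" using add_ge_min[of x y] assms by simp
  show "v (x + y) \<le> v x"
  proof (rule ccontr)
    assume "\<not> v (x + y) \<le> v x"
    then have "v x < min (v (x + y)) (v y)" using assms by simp
    also have "\<dots> \<le> v (x + y - y)" by (rule diff_ge_min)
    finally show False by simp
  qed
qed

lemma power: "v x = ereal r \<Longrightarrow> v (x ^ n) = ereal (real n * r)"
  by (induction n) (simp_all add: algebra_simps zero_ereal_def)

lemma inverse:
  assumes "v x = ereal r"
  shows "v (inverse x) = ereal (- r)"
proof -
  have "x \<noteq> 0" using assms by auto
  then have "ereal r + v (inverse x) = 0" using mult[of x "inverse x"] assms by simp
  then show ?thesis by (cases "v (inverse x)") (auto simp: zero_ereal_def)
qed

lemma int_multiple_value: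
  assumes "v \<pi> = ereal c"
  shows "\<exists>y. v y = ereal (of_int m * c)"
proof (cases "0 \<le> m")
  case True
  then show ?thesis using power[OF assms, of "nat m"] by (intro exI[of _ "\<pi> ^ nat m"]) simp
next
  case False
  then show ?thesis using power[OF inverse[OF assms], of "nat (- m)"]
    by (intro exI[of _ "inverse \<pi> ^ nat (- m)"]) simp
qed

lemma root_value:
  assumes "alg_closed TYPE('a)" and y: "v y = ereal r" and "0 < n"
  shows "\<exists>x. v x = ereal (r / real n)"
proof -
  have "degree (monom 1 n + [:- y:]) = n"
    using \<open>0 < n\<close> by (simp add: degree_add_eq_left degree_monom_eq)
  then obtain x where "poly (monom 1 n + [:- y:]) x = 0"
    using assms(1) \<open>0 < n\<close> unfolding alg_closed_def by (metis One_nat_def Suc_leI)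
  then have xn: "x ^ n = y" by (simp add: poly_monom)
  then have "x \<noteq> 0" using y \<open>0 < n\<close> by (auto simp: zero_power)
  then obtain s where s: "v x = ereal s" by (rule real_value)
  have "real n * s = r" using power[OF s, of n] xn y by simp
  then show ?thesis using s \<open>0 < n\<close> by (intro exI[of _ x]) (simp add: field_simps)
qed

lemma exists_value_of_rat:
  assumes "alg_closed TYPE('a)" and "discrete_on v K"
  shows "\<exists>\<beta>. v \<beta> = ereal (of_rat q)"
proof -
  obtain c :: rat where "0 < c" and img: "v ` (K - {0}) = {ereal (of_rat (of_int n * c)) | n. True}"
    using assms(2) unfolding discrete_on_def by blast
  then obtain \<pi> where "v \<pi> = ereal (of_rat c)"
    by (metis (mono_tags, lifting) imageE mem_Collect_eq mult_1 of_int_1)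
  obtain m n where mn: "quotient_of (q / c) = (m, n)" by fastforce
  have "0 < n" using quotient_of_denom_pos[OF mn] .
  have q: "q = of_int m * c / of_int n"
    using quotient_of_div[OF mn] \<open>0 < c\<close> by (simp add: field_simps)
  obtain y where "v y = ereal (of_int m * of_rat c)"
    using int_multiple_value[OF \<open>v \<pi> = _\<close>] by blast
  then obtain x where "v x = ereal (of_int m * of_rat c / real (nat n))"
    using root_value[OF assms(1)] \<open>0 < n\<close> by (meson zero_less_nat_eq)
  then show ?thesis using \<open>0 < n\<close> by (intro exI[of _ x]) (simp add: q of_rat_mult of_rat_divide)
qed

end

section \<open>Discs and clusters\<close>

context valuation
begin

lemma disc_diff_ge:
  assumes "x \<in> disc v c r" and "y \<in> disc v c r"
  shows "r \<le> v (x - y)"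
proof -
  have "r \<le> min (v (x - c)) (v (y - c))" using assms unfolding disc_def by simp
  also have "\<dots> \<le> v ((x - c) - (y - c))" by (rule diff_ge_min)
  finally show ?thesis by simp
qed

lemma disc_diff_less:
  assumes "x \<in> disc v c r" and "y \<notin> disc v c r"
  shows "v (x - y) < r"
proof (rule ccontr)
  assume "\<not> v (x - y) < r"
  then have "r \<le> min (v (x - y)) (v (x - c))" using assms(1) unfolding disc_def by simp
  also have "\<dots> \<le> v ((x - c) - (x - y))" by (subst min.commute) (rule diff_ge_min)
  finally show False using assms(2) unfolding disc_def by simp
qed

lemma cluster_inside_closer:
  assumes "is_cluster v R s" and "x \<in> s" and "y \<in> s" and "z \<in> R - s"
  shows "v (x - z) < v (x - y)"
proof -
  obtain c r where s: "s = disc v c r \<inter> R" using assms(1) unfolding is_cluster_def by blast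
  then have "v (x - z) < r" using assms(2,4) by (blast intro: disc_diff_less)
  also have "r \<le> v (x - y)" using s assms(2,3) by (blast intro: disc_diff_ge)
  finally show ?thesis .
qed

lemma is_cluster_self:
  assumes "finite R" and "R \<noteq> {}"
  shows "is_cluster v R R"
proof -
  obtain \<alpha> where "\<alpha> \<in> R" using assms(2) by blast
  obtain r where r: "\<And>x. x \<in> R \<Longrightarrow> r \<le> real_of_ereal (v (x - \<alpha>))"
    using bdd_below_finite[of "(\<lambda>x. real_of_ereal (v (x - \<alpha>))) ` R"] assms(1)
    unfolding bdd_below_def by auto
  have "ereal (of_rat (of_int \<lfloor>r\<rfloor>)) \<le> v (x - \<alpha>)" if "x \<in> R" for x
  proof (cases "x = \<alpha>")
    case False
    then obtain t where t: "v (x - \<alpha>) = ereal t" using real_value by (metis right_minus_eq)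
    then show ?thesis using r[OF that] by (simp add: order_trans[OF of_int_floor_le])
  qed simp
  then have "R = disc v \<alpha> (ereal (of_rat (of_int \<lfloor>r\<rfloor>))) \<inter> R"
    unfolding disc_def by blast
  then show ?thesis unfolding is_cluster_def using assms(2) by blast
qed

lemma dplus_doubleton:
  assumes "a \<noteq> b"
  shows "dplus v {a, b} = v (a - b)"
proof -
  have "{v (x - y) | x y. x \<in> {a, b} \<and> y \<in> {a, b} \<and> x \<noteq> y} = {v (a - b)}"
    using assms diff_commute[of a b] by auto
  then show ?thesis unfolding dplus_def by simp
qed

lemma dplus_triple:
  assumes "v (a - c) < v (a - b)" and "b \<noteq> a"
  shows "dplus v {a, b, c} = v (a - c)"
proof -
  have "c \<noteq> a" "c \<noteq> b" using assms(1) by auto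
  have "v (b - c) = v (a - c)"
    using add_eq_left[of "a - c" "b - a"] assms(1) diff_commute[of b a] by simp
  then have "v (b - a) = v (a - b)" "v (c - a) = v (a - c)" "v (b - c) = v (a - c)" "v (c - b) = v (a - c)"
    using diff_commute by metis+
  then have "{v (x - y) | x y. x \<in> {a, b, c} \<and> y \<in> {a, b, c} \<and> x \<noteq> y} = {v (a - b), v (a - c)}"
    using \<open>c \<noteq> a\<close> \<open>c \<noteq> b\<close> assms(2) by auto
  then show ?thesis unfolding dplus_def using assms(1) by simp
qed

end

lemma parent_insert:
  assumes "is_cluster v R R" and "R = insert a s" and "a \<notin> s"
  shows "parent v R s = R"
proof -
  have "c = R" if "is_cluster v R c" and "s \<subset> c" for c
  proof -
    have "c \<subseteq> R" using that(1) unfolding is_cluster_def by blast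
    with that(2) assms(2) show ?thesis by blast
  qed
  then show ?thesis unfolding parent_def using assms by (intro the_equality) auto
qed

section \<open>Roots of a separable cubic\<close>

lemma rsquarefree_if_coprime_pderiv:
  fixes f :: "'a::field_char_0 poly"
  assumes "coprime f (pderiv f)"
  shows "rsquarefree f"
  unfolding rsquarefree_roots
proof (intro allI notI)
  fix a assume "poly f a = 0 \<and> poly (pderiv f) a = 0"
  then have "[:- a, 1:] dvd f" and "[:- a, 1:] dvd pderiv f" by (simp_all add: poly_eq_0_iff_dvd)
  then have "is_unit [:- a, 1:]" by (rule coprime_common_divisor[OF assms])
  then show False by (simp add: is_unit_iff_degree)
qed

lemma rsquarefree_not_square_dvd:
  assumes "rsquarefree f"
  shows "\<not> [:- a, 1:] ^ 2 dvd f"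
proof
  assume "[:- a, 1:] ^ 2 dvd f"
  then have "2 \<le> order a f" using assms by (simp add: order_divides rsquarefree_def)
  moreover have "order a f \<le> 1" using assms unfolding rsquarefree_def by (metis le_refl zero_le)
  ultimately show False by simp
qed

lemma roots_of_cubic:
  fixes f :: "'a::field poly"
  assumes "degree f = 3" and "rsquarefree f"
    and "poly f a1 = 0" and "poly f a2 = 0" and "a1 \<noteq> a2"
  obtains a3 where "a3 \<notin> {a1, a2}" and "{x. poly f x = 0} = {a1, a2, a3}"
proof -
  obtain f1 where f1: "f = [:- a1, 1:] * f1" using assms(3) by (auto simp: poly_eq_0_iff_dvd)
  then have "poly f1 a2 = 0" using assms(4,5) by simp
  then obtain f2 where f2: "f1 = [:- a2, 1:] * f2" by (auto simp: poly_eq_0_iff_dvd)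
  have "f2 \<noteq> 0" using assms(1) f1 f2 by auto
  then have "degree f2 = 1"
    using assms(1) unfolding f1 f2 by (simp add: degree_mult_eq del: mult_pCons_left)
  then obtain c b where "f2 = [:b, c:]" and "c \<noteq> 0" by (rule degree1_coeffs)
  define a3 where "a3 = - b / c"
  have "f2 = smult c [:- a3, 1:]" using \<open>f2 = _\<close> \<open>c \<noteq> 0\<close> by (simp add: a3_def)
  then have f: "f = smult c ([:- a1, 1:] * [:- a2, 1:] * [:- a3, 1:])"
    using f1 f2 by (simp add: algebra_simps)
  have "poly f x = c * ((x - a1) * (x - a2) * (x - a3))" for x
    unfolding f by (simp only: poly_smult poly_mult) simp
  then have roots: "{x. poly f x = 0} = {a1, a2, a3}" using \<open>c \<noteq> 0\<close> by auto
  have "a3 \<noteq> a1"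
  proof
    assume "a3 = a1"
    then have "f = [:- a1, 1:] ^ 2 * smult c [:- a2, 1:]"
      unfolding f by (simp add: power2_eq_square algebra_simps)
    then have "[:- a1, 1:] ^ 2 dvd f" by (rule dvdI)
    with rsquarefree_not_square_dvd[OF assms(2)] show False by blast
  qed
  moreover have "a3 \<noteq> a2"
  proof
    assume "a3 = a2"
    then have "f = [:- a2, 1:] ^ 2 * smult c [:- a1, 1:]"
      unfolding f by (simp add: power2_eq_square algebra_simps)
    then have "[:- a2, 1:] ^ 2 dvd f" by (rule dvdI)
    with rsquarefree_not_square_dvd[OF assms(2)] show False by blast
  qed
  ultimately show thesis using roots by (intro that) auto
qed

section \<open>Part-square decompositions\<close>

lemma vpoly_le_coeff: "vpoly v p \<le> v (coeff p i)"
  unfolding vpoly_def by (rule INF_lower) simp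

lemma psd_degree_le_one:
  assumes "is_psd h q \<rho>" and "degree h \<le> 2"
  shows "degree q \<le> 1"
proof -
  have "degree q \<le> nat \<lceil>real (degree h) / 2\<rceil>" using assms(1) unfolding is_psd_def by blast
  also have "\<dots> \<le> 1" using assms(2) by simp
  finally show ?thesis .
qed

lemma tdisc_eq_min:
  assumes h: "h = pcompose (poly_of_roots S) [:\<alpha>, \<beta>:]"
    and psd: "is_psd h q0 \<rho>0" and T: "tpsd v h \<rho>0 = T"
    and optimal: "\<And>q \<rho>. is_psd h q \<rho> \<Longrightarrow> T < 2 * v 2 \<Longrightarrow> tpsd v h \<rho> \<le> T"
  shows "tdisc v S \<alpha> \<beta> = min T (2 * v 2)"
proof -
  define qr where "qr = (SOME qr. good_psd v h (fst qr) (snd qr))"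
  define t where "t = tpsd v h (snd qr)"
  have "good_psd v h q0 \<rho>0"
    unfolding good_psd_def using psd T optimal by (meson leD le_less_linear order.strict_trans2)
  then have good: "good_psd v h (fst qr) (snd qr)"
    unfolding qr_def by (metis (mono_tags, lifting) fst_conv snd_conv someI)
  have T_le: "T \<le> t \<or> 2 * v 2 \<le> t"
    using good psd T unfolding good_psd_def t_def by (meson not_le)
  have le_T: "t \<le> T" if "T < 2 * v 2"
    using good optimal that unfolding good_psd_def t_def by blast
  have "tdisc v S \<alpha> \<beta> = min t (2 * v 2)"
    unfolding tdisc_def h t_def qr_def Let_def ..
  also have "\<dots> = min T (2 * v 2)"
  proof (cases "T < 2 * v 2")
    case True
    then have "t = T" using T_le le_T by (meson antisym not_le order.strict_trans2)
    then show ?thesis by simp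
  next
    case False
    then have "2 * v 2 \<le> t" using T_le by (meson not_le order.trans)
    then show ?thesis using False by (simp add: min_absorb2)
  qed
  finally show ?thesis .
qed

lemma tdisc_r_eqI:
  assumes "\<exists>\<beta>. v \<beta> = r" and "\<And>\<beta>. v \<beta> = r \<Longrightarrow> tdisc v S \<alpha> \<beta> = t"
  shows "tdisc_r v S \<alpha> r = t"
  unfolding tdisc_r_def using someI_ex[OF assms(1)] by (rule assms(2))

lemma alg_closed_square_root:
  fixes x :: "'a::field"
  assumes "alg_closed TYPE('a)"
  obtains e where "e * e = x"
proof -
  have "degree [:- x, 0, 1:] = 2" by simp
  then obtain e where "poly [:- x, 0, 1:] e = 0"
    using assms unfolding alg_closed_def by (metis one_le_numeral)
  then show thesis by (intro that) (simp add: algebra_simps)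
qed

lemma b0_min:
  assumes "\<And>b. 0 \<le> b \<Longrightarrow> F b = min (ereal (of_rat b)) (2 * v 2)"
    and "v 2 = ereal (of_rat w)" and "0 \<le> w"
  shows "b0 v F = 2 * w"
  unfolding b0_def
proof (rule Least_equality)
  show "0 \<le> 2 * w \<and> F (2 * w) = 2 * v 2"
    using assms by (simp add: of_rat_mult)
  fix b assume "0 \<le> b \<and> F b = 2 * v 2"
  then have "min (ereal (of_rat b)) (2 * v 2) = 2 * v 2" using assms(1)[of b] by simp
  then have "2 * of_rat w \<le> (of_rat b :: real)" using assms(2) by (simp add: min_def split: if_splits)
  then have "(of_rat (2 * w) :: real) \<le> of_rat b" by (simp add: of_rat_mult)
  then show "2 * w \<le> b" by (simp only: of_rat_less_eq)
qed

context valuation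
begin

lemma vpoly_quadratic: "vpoly v [:a, b, c:] = min (v a) (min (v b) (v c))"
proof (rule antisym)
  show "vpoly v [:a, b, c:] \<le> min (v a) (min (v b) (v c))"
    using vpoly_le_coeff[of v "[:a, b, c:]" 0] vpoly_le_coeff[of v "[:a, b, c:]" 1]
      vpoly_le_coeff[of v "[:a, b, c:]" 2]
    by (simp add: numeral_2_eq_2)
  have "min (v a) (min (v b) (v c)) \<le> v (coeff [:a, b, c:] i)" for i
    by (cases i; cases "i - 1"; cases "i - 2")
      (auto simp: coeff_pCons min.coboundedI1 min.coboundedI2 split: nat.splits)
  then show "min (v a) (min (v b) (v c)) \<le> vpoly v [:a, b, c:]"
    unfolding vpoly_def by (rule INF_greatest)
qed

lemma remainder_vpoly_le:
  assumes psd: "is_psd [:h0, c, h2:] q \<rho>" and "h0 * h2 = 0"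
    and small: "v c < vpoly v [:h0, c, h2:] + 2 * v 2"
  shows "vpoly v \<rho> \<le> v c"
proof (rule ccontr)
  define m where "m = vpoly v [:h0, c, h2:]"
  define e u where "e = coeff q 0" and "u = coeff q 1"
  assume "\<not> vpoly v \<rho> \<le> v c"
  then have less: "v c < v (coeff \<rho> i)" for i using vpoly_le_coeff[of v \<rho> i] by simp
  have "degree q \<le> 1" using psd by (rule psd_degree_le_one) simp
  then have "q = [:e, u:]"
    unfolding e_def u_def by (auto simp: poly_eq_iff coeff_pCons coeff_eq_0 split: nat.splits)
  then have "\<rho> = [:h0, c, h2:] - [:e, u:] ^ 2" using psd unfolding is_psd_def by (simp add: eq_diff_eq)
  also have "[:e, u:] ^ 2 = [:e * e, 2 * e * u, u * u:]" by (simp add: power2_eq_square algebra_simps)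
  finally have "\<rho> = [:h0 - e * e, c - 2 * e * u, h2 - u * u:]" by simp
  then have \<rho>0: "v c < v (h0 - e * e)" and \<rho>1: "v c < v (c - 2 * e * u)"
    and \<rho>2: "v c < v (h2 - u * u)"
    using less[of 0] less[of 1] less[of 2] by (simp_all add: numeral_2_eq_2)
  have m: "m = min (v h0) (min (v c) (v h2))" unfolding m_def by (rule vpoly_quadratic)
  have "v (c + - (c - 2 * e * u)) = v c" using \<rho>1 by (intro add_eq_left) (simp only: uminus)
  then have "v (2 * e * u) = v c" by simp
  moreover have "c \<noteq> 0" using \<rho>1 by auto
  ultimately have "2 * e * u \<noteq> 0" by (metis eq_infinity_iff)
  then obtain W E U where W: "v 2 = ereal W" and E: "v e = ereal E" and U: "v u = ereal U"
    by (metis mult_eq_0_iff real_value)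
  obtain C where C: "v c = ereal C" using \<open>c \<noteq> 0\<close> by (rule real_value)
  have "m \<noteq> - \<infinity>" "m \<le> v c" using m by (auto simp: min_def)
  then obtain M where M: "m = ereal M" using C by (cases m) auto
  have "min (v h0) (v (h0 - e * e)) \<le> v (h0 - (h0 - e * e))" by (rule diff_ge_min)
  then have "m \<le> v (e * e)" using m \<rho>0 \<open>m \<le> v c\<close> by (auto simp: min_def split: if_splits)
  have "min (v h2) (v (h2 - u * u)) \<le> v (h2 - (h2 - u * u))" by (rule diff_ge_min)
  then have "m \<le> v (u * u)" using m \<rho>2 \<open>m \<le> v c\<close> by (auto simp: min_def split: if_splits)
  txt \<open>Whichever of h0, h2 vanishes, the matching square alone is a coefficient of \<rho>.\<close>
  have "v c < v (e * e) \<or> v c < v (u * u)" using \<open>h0 * h2 = 0\<close> \<rho>0 \<rho>2 by auto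
  moreover note \<open>v (2 * e * u) = v c\<close> \<open>m \<le> v (e * e)\<close> \<open>m \<le> v (u * u)\<close> small
  ultimately have "C < E + E \<or> C < U + U" "W + E + U = C" "M \<le> E + E" "M \<le> U + U" "C < M + 2 * W"
    unfolding m_def[symmetric] using W E U C M by simp_all
  then show False by linarith
qed

lemma tdisc_square_plus_linear:
  assumes h: "pcompose (poly_of_roots S) [:\<alpha>, \<beta>:] = [:e * e, c, u * u:]"
    and "e * u = 0" and "c \<noteq> 0"
  shows "tdisc v S \<alpha> \<beta> = min (v c - vpoly v [:e * e, c, u * u:]) (2 * v 2)"
proof (rule tdisc_eq_min[OF h[symmetric]])
  define m where "m = vpoly v [:e * e, c, u * u:]"
  have m: "m = min (v (e * e)) (min (v c) (v (u * u)))" unfolding m_def by (rule vpoly_quadratic)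
  then have "m \<noteq> - \<infinity>" "m \<le> v c" by (auto simp: min_def)
  then have "\<bar>m\<bar> \<noteq> \<infinity>" using \<open>c \<noteq> 0\<close> by auto
  have "degree [:e, u:] \<le> nat \<lceil>real (degree [:e * e, c, u * u:]) / 2\<rceil>"
    using \<open>c \<noteq> 0\<close> by (cases "u = 0") auto
  moreover have "[:e * e, c, u * u:] = [:e, u:] ^ 2 + [:0, c:]"
    using \<open>e * u = 0\<close> by (simp add: power2_eq_square mult.assoc)
  ultimately show "is_psd [:e * e, c, u * u:] [:e, u:] [:0, c:]" unfolding is_psd_def by simp
  show "tpsd v [:e * e, c, u * u:] [:0, c:] = v c - m"
    unfolding tpsd_def m_def using vpoly_quadratic[of 0 c 0] by simp
  fix q \<rho>
  assume psd: "is_psd [:e * e, c, u * u:] q \<rho>" and "v c - m < 2 * v 2"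
  then have "v c < m + 2 * v 2" using \<open>\<bar>m\<bar> \<noteq> \<infinity>\<close> by (simp add: ereal_minus_less add.commute)
  moreover have "e * e * (u * u) = 0" using \<open>e * u = 0\<close> by simp
  ultimately have "vpoly v \<rho> \<le> v c" using remainder_vpoly_le[OF psd] unfolding m_def by blast
  then show "tpsd v [:e * e, c, u * u:] \<rho> \<le> v c - m"
    unfolding tpsd_def m_def by (rule ereal_minus_mono) simp
qed

lemma tdisc_doubleton:
  assumes "v (\<alpha> - a) = ereal d" and "v \<beta> = ereal (d - b)" and "0 \<le> b"
  shows "tdisc v {#\<alpha>, a#} \<alpha> \<beta> = min (ereal b) (2 * v 2)"
proof -
  have "\<beta> \<noteq> 0" "\<alpha> - a \<noteq> 0" using assms(1,2) by auto
  have "pcompose (poly_of_roots {#\<alpha>, a#}) [:\<alpha>, \<beta>:] = [:0 * 0, \<beta> * (\<alpha> - a), \<beta> * \<beta>:]"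
    unfolding poly_of_roots_def by (simp add: pcompose_pCons algebra_simps)
  from tdisc_square_plus_linear[OF this]
  have "tdisc v {#\<alpha>, a#} \<alpha> \<beta> =
      min (v (\<beta> * (\<alpha> - a)) - vpoly v [:0, \<beta> * (\<alpha> - a), \<beta> * \<beta>:]) (2 * v 2)"
    using \<open>\<beta> \<noteq> 0\<close> \<open>\<alpha> - a \<noteq> 0\<close> by simp
  also have "v (\<beta> * (\<alpha> - a)) - vpoly v [:0, \<beta> * (\<alpha> - a), \<beta> * \<beta>:] = ereal b"
    using vpoly_quadratic[of 0 "\<beta> * (\<alpha> - a)" "\<beta> * \<beta>"] assms by simp
  finally show ?thesis .
qed

lemma tdisc_singleton:
  assumes "alg_closed TYPE('a)"
    and "v (\<alpha> - a) = ereal d" and "v \<beta> = ereal (d + b)" and "0 \<le> b"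
  shows "tdisc v {#a#} \<alpha> \<beta> = min (ereal b) (2 * v 2)"
proof -
  obtain e where "e * e = \<alpha> - a" using assms(1) by (rule alg_closed_square_root)
  have "\<beta> \<noteq> 0" using assms(3) by auto
  have "pcompose (poly_of_roots {#a#}) [:\<alpha>, \<beta>:] = [:e * e, \<beta>, 0 * 0:]"
    unfolding poly_of_roots_def using \<open>e * e = _\<close> by (simp add: pcompose_pCons algebra_simps)
  from tdisc_square_plus_linear[OF this]
  have "tdisc v {#a#} \<alpha> \<beta> = min (v \<beta> - vpoly v [:\<alpha> - a, \<beta>:]) (2 * v 2)"
    using \<open>\<beta> \<noteq> 0\<close> \<open>e * e = _\<close> by simp
  also have "v \<beta> - vpoly v [:\<alpha> - a, \<beta>:] = ereal b"
    using vpoly_quadratic[of "\<alpha> - a" \<beta> 0] assms by simp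
  finally show ?thesis .
qed

lemma tplus_doubleton:
  assumes all_values: "\<And>r::rat. \<exists>\<beta>. v \<beta> = ereal (of_rat r)" and "a \<noteq> \<alpha>" and "0 \<le> b"
  shows "tplus v {\<alpha>, a} \<alpha> b = min (ereal (of_rat b)) (2 * v 2)"
proof -
  obtain d where d: "v (\<alpha> - a) = ereal (of_rat d)"
    using assms(2) by (metis right_minus_eq rational_value)
  have "tplus v {\<alpha>, a} \<alpha> b = tdisc_r v {#\<alpha>, a#} \<alpha> (ereal (of_rat (d - b)))"
    unfolding tplus_def using assms(2) d dplus_doubleton[of \<alpha> a] by (simp add: of_rat_diff)
  also have "\<dots> = min (ereal (of_rat b)) (2 * v 2)"
    using all_values by (rule tdisc_r_eqI) (simp add: tdisc_doubleton[OF d] of_rat_diff assms(3))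
  finally show ?thesis .
qed

lemma tminus_doubleton:
  assumes all_values: "\<And>r::rat. \<exists>\<beta>. v \<beta> = ereal (of_rat r)" and "alg_closed TYPE('a)"
    and closer: "v (\<alpha> - a') < v (\<alpha> - a)" and "a \<noteq> \<alpha>" and "a' \<notin> {\<alpha>, a}" and "0 \<le> b"
  shows "tminus v {\<alpha>, a, a'} {\<alpha>, a} \<alpha> b = min (ereal (of_rat b)) (2 * v 2)"
proof -
  obtain d where d: "v (\<alpha> - a') = ereal (of_rat d)"
    using assms(5) by (metis insert_iff right_minus_eq rational_value)
  have "{\<alpha>, a, a'} = insert a' {\<alpha>, a}" by auto
  then have "parent v {\<alpha>, a, a'} {\<alpha>, a} = {\<alpha>, a, a'}"
    using assms(5) by (intro parent_insert is_cluster_self) auto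
  then have "dminus v {\<alpha>, a, a'} {\<alpha>, a} = v (\<alpha> - a')"
    unfolding dminus_def using closer assms(4) by (simp add: dplus_triple)
  moreover have "{\<alpha>, a, a'} - {\<alpha>, a} = {a'}" using assms(5) by auto
  ultimately have "tminus v {\<alpha>, a, a'} {\<alpha>, a} \<alpha> b = tdisc_r v {#a'#} \<alpha> (ereal (of_rat (d + b)))"
    unfolding tminus_def using d by (simp add: of_rat_add)
  also have "\<dots> = min (ereal (of_rat b)) (2 * v 2)"
    using all_values by (rule tdisc_r_eqI) (simp add: tdisc_singleton[OF assms(2) d] of_rat_add assms(6))
  finally show ?thesis .
qed

end

theorem corollary1p3:
  fixes K :: "'L::field_char_0 set" and v :: "'L \<Rightarrow> ereal"
    and f :: "'L poly" and g :: nat and s :: "'L set" and \<alpha> :: 'L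
  assumes "dvf_setting K v"
    and "\<forall>i. coeff f i \<in> K"
    and "degree f = 2 * g + 1"
    and "coprime f (pderiv f)"
    and "g = 1"
    and "is_cluster v {x. poly f x = 0} s"
    and "card s = 2"
    and "\<alpha> \<in> s"
  shows "Bfs v {x. poly f x = 0} s \<alpha> = 4 * v 2"
proof -
  define R where "R = {x. poly f x = 0}"
  have "valuation v" and closed: "alg_closed TYPE('L)" and "discrete_on v K" and "0 < v 2"
    using assms(1) unfolding dvf_setting_def valuation_def by auto
  then interpret valuation v by simp
  have all_values: "\<And>r. \<exists>\<beta>. v \<beta> = ereal (of_rat r)"
    using closed \<open>discrete_on v K\<close> by (rule exists_value_of_rat)
  obtain a where s: "s = {\<alpha>, a}" and "a \<noteq> \<alpha>"
    using assms(7,8) by (metis card_2_iff doubleton_eq_iff insertE singletonD)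
  moreover have "s \<subseteq> R" using assms(6) unfolding is_cluster_def R_def by blast
  ultimately obtain a' where "a' \<notin> {\<alpha>, a}" and R: "R = {\<alpha>, a, a'}"
    using roots_of_cubic[OF _ rsquarefree_if_coprime_pderiv[OF assms(4)]] assms(3,5)
    unfolding R_def by auto
  then have "v (\<alpha> - a') < v (\<alpha> - a)"
    using assms(6) s by (intro cluster_inside_closer[of "R"]) (auto simp: R_def)
  obtain w where w: "v 2 = ereal (of_rat w)" by (metis rational_value zero_neq_numeral)
  with \<open>0 < v 2\<close> have "0 \<le> w" by simp
  have "b0 v (tplus v s \<alpha>) = 2 * w"
    using tplus_doubleton[OF all_values \<open>a \<noteq> \<alpha>\<close>] w \<open>0 \<le> w\<close> unfolding s by (rule b0_min)
  moreover have "b0 v (tminus v R s \<alpha>) = 2 * w"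
    using tminus_doubleton[OF all_values closed \<open>v (\<alpha> - a') < _\<close> \<open>a \<noteq> \<alpha>\<close> \<open>a' \<notin> _\<close>]
      w \<open>0 \<le> w\<close>
    unfolding s R by (rule b0_min)
  ultimately show ?thesis unfolding Bfs_def R_def[symmetric] w by (simp add: of_rat_add of_rat_mult)
qed

end
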